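(* Let $n\le m$, let $\Omega\subset\mathbb{R}^n$ be open, $f\colon\Omega\to\mathbb{R}^m$ continuous, $x\in\Omega$ such that the Fréchet differential $f'(x)$ exists, and $\eta\in(0,1)$. Then there are $\delta>0$ and $r_0>0$ such that for all $r\le r_0$ and every continuous $g\colon B(x,r)\to\mathbb{R}^m$ with $\sup_{y\in B(x,r)}|g(y)-f(y)|\le\delta r$ it holds that \[\mathcal{H}^n(g(B(x,r)))\ge\eta\operatorname{vol}f'(x)\,\mathcal{H}^n(B(x,r)).\]
   Context: $\mathbb{R}^n,\mathbb{R}^m$ carry Euclidean norms; $B(x,r)$ is the closed Euclidean ball in $\mathbb{R}^n$. $\mathcal{H}^n$ is the $n$-dimensional Hausdorff measure $\sup_\delta\inf\{\sum(\operatorname{diam}A_i)^n\}$ over covers by sets of diameter $\le\delta$. For a linear $A\colon\mathbb{R}^n\to\mathbb{R}^m$, $\operatorname{vol}A=\sqrt{\det A^TA}$. *)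

theory Defs
  imports "HOL-Analysis.Analysis"
begin

text \<open>Unnormalised d-dimensional Hausdorff pre-measure at scale delta:
  infimum of sums of (diam A_i)^d over countable covers by bounded sets of diameter at most delta.\<close>
definition hausdorff_pre :: "nat \<Rightarrow> real \<Rightarrow> 'a::metric_space set \<Rightarrow> ennreal" where
  "hausdorff_pre d \<delta> S =
     (INF A \<in> {A :: nat \<Rightarrow> 'a set. S \<subseteq> (\<Union>i. A i) \<and> (\<forall>i. bounded (A i) \<and> diameter (A i) \<le> \<delta>)}.
        (\<Sum>i. ennreal (diameter (A i) ^ d)))"

definition hausdorff_measure :: "nat \<Rightarrow> 'a::metric_space set \<Rightarrow> ennreal" where
  "hausdorff_measure d S = (SUP \<delta> \<in> {0<..}. hausdorff_pre d \<delta> S)"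

definition lin_vol :: "(real^'n \<Rightarrow> real^'m) \<Rightarrow> real" where
  "lin_vol L = sqrt (det (transpose (matrix L) ** matrix L))"

end

theory Submission
  imports Defs
begin

text \<open>Let \<open>\<Psi>\<close> take coordinates with respect to an orthonormal basis of the range of \<open>f'\<close>.
  Then \<open>\<Psi>\<close> is \<open>1\<close>-Lipschitz and \<open>S = \<Psi> \<circ> f'\<close> is a square matrix with \<open>\<bar>det S\<bar> = vol f'\<close>.
  If \<open>g\<close> is \<open>\<delta> r\<close>-close to \<open>f\<close> on \<open>B(x, r)\<close> and \<open>r\<close> is small, then \<open>\<Psi> \<circ> g\<close> is so close to the
  affine map \<open>y \<mapsto> \<Psi> (f x) + S (y - x)\<close> that, by Brouwer's fixed point theorem, its image
  contains \<open>\<Psi> (f x) + S (B(0, (1 - \<theta>) r))\<close>. Hence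
  \<open>H\<^sup>n(g B) \<ge> H\<^sup>n(\<Psi> g B) \<ge> H\<^sup>n(S B(0, (1 - \<theta>) r)) \<ge> \<bar>det S\<bar> (1 - \<theta>)\<^sup>n H\<^sup>n(B(x, r))\<close>; the last
  step holds because on open sets \<open>H\<^sup>n\<close> dominates \<open>H\<^sup>n(B(0, 1)) / \<omega>\<^sub>n\<close> times Lebesgue measure
  (cover by disjoint balls, Vitali) and Lebesgue measure scales by \<open>\<bar>det S\<bar>\<close> under \<open>S\<close>.
  Choosing \<open>(1 - \<theta>)\<^sup>n = \<eta>\<close> gives the claim.\<close>

lemma diameter_le_metric:
  fixes S :: "'a::metric_space set"
  assumes "0 \<le> e" "\<And>x y. x \<in> S \<Longrightarrow> y \<in> S \<Longrightarrow> dist x y \<le> e"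
  shows "diameter S \<le> e"
  unfolding diameter_def using assms by (auto intro!: cSUP_least)

lemma ennreal_mult_INF:
  assumes "0 < c"
  shows "ennreal c * (INF z\<in>Z. f z) = (INF z\<in>Z. ennreal c * f z)"
proof (rule antisym)
  show "ennreal c * (INF z\<in>Z. f z) \<le> (INF z\<in>Z. ennreal c * f z)"
    by (intro INF_greatest mult_left_mono INF_lower) auto
  have cancel: "ennreal (1 / c) * (ennreal c * y) = y" for y
    using assms by (simp add: mult.assoc[symmetric] ennreal_mult[symmetric])
  have "ennreal (1 / c) * (INF z\<in>Z. ennreal c * f z) \<le> (INF z\<in>Z. f z)"
    by (rule INF_greatest, subst cancel[symmetric]) (intro mult_left_mono INF_lower; simp)
  then have "ennreal c * (ennreal (1 / c) * (INF z\<in>Z. ennreal c * f z)) \<le> ennreal c * (INF z\<in>Z. f z)"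
    by (rule mult_left_mono) simp
  then show "(INF z\<in>Z. ennreal c * f z) \<le> ennreal c * (INF z\<in>Z. f z)"
    using assms by (simp add: mult.assoc[symmetric] ennreal_mult[symmetric])
qed

lemma hausdorff_pre_mono: "S \<subseteq> T \<Longrightarrow> hausdorff_pre d \<delta> S \<le> hausdorff_pre d \<delta> T"
  unfolding hausdorff_pre_def by (rule INF_superset_mono) auto

lemma hausdorff_pre_antimono: "\<delta> \<le> \<delta>' \<Longrightarrow> hausdorff_pre d \<delta>' S \<le> hausdorff_pre d \<delta> S"
  unfolding hausdorff_pre_def by (rule INF_superset_mono) (auto intro: order_trans)

lemma hausdorff_pre_le_hausdorff_measure: "0 < \<delta> \<Longrightarrow> hausdorff_pre d \<delta> S \<le> hausdorff_measure d S"
  unfolding hausdorff_measure_def by (rule SUP_upper) auto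

lemma hausdorff_measure_mono: "S \<subseteq> T \<Longrightarrow> hausdorff_measure d S \<le> hausdorff_measure d T"
  unfolding hausdorff_measure_def by (intro SUP_mono) (use hausdorff_pre_mono in blast)

lemma hausdorff_pre_lipschitz_image:
  fixes \<phi> :: "'a::metric_space \<Rightarrow> 'b::metric_space"
  assumes K: "0 < K" and lip: "\<And>a b. a \<in> S \<Longrightarrow> b \<in> S \<Longrightarrow> dist (\<phi> a) (\<phi> b) \<le> K * dist a b"
  shows "hausdorff_pre d \<delta> (\<phi> ` S) \<le> ennreal (K ^ d) * hausdorff_pre d (\<delta> / K) S"
proof -
  have "hausdorff_pre d \<delta> (\<phi> ` S) \<le> ennreal (K ^ d) * (\<Sum>i. ennreal (diameter (A i) ^ d))"
    if A: "S \<subseteq> (\<Union>i. A i)" "\<And>i. bounded (A i)" "\<And>i. diameter (A i) \<le> \<delta> / K" for A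
  proof -
    define B where "B i = \<phi> ` (A i \<inter> S)" for i
    have dist_B: "dist p q \<le> K * diameter (A i)" if "p \<in> B i" "q \<in> B i" for i p q
      using that K lip diameter_bounded_bound[OF A(2)] unfolding B_def
      by (smt (verit, best) IntE image_iff mult_left_mono)
    have B: "bounded (B i)" "diameter (B i) \<le> K * diameter (A i)" for i
    proof -
      show "bounded (B i)"
        using dist_B unfolding bounded_def by metis
      show "diameter (B i) \<le> K * diameter (A i)"
        using dist_B diameter_ge_0[OF A(2)] K by (intro diameter_le_metric) auto
    qed
    have "\<phi> ` S \<subseteq> (\<Union>i. B i)"
      using A(1) unfolding B_def by blast
    moreover have "diameter (B i) \<le> \<delta>" for i
      using B(2)[of i] A(3)[of i] K by (auto simp: field_simps intro: order_trans)
    ultimately have "hausdorff_pre d \<delta> (\<phi> ` S) \<le> (\<Sum>i. ennreal (diameter (B i) ^ d))"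
      unfolding hausdorff_pre_def using B(1) by (intro INF_lower) auto
    also have "\<dots> \<le> (\<Sum>i. ennreal (K ^ d) * ennreal (diameter (A i) ^ d))"
      using B diameter_ge_0[of "B _"] diameter_ge_0[OF A(2)] K
      by (intro suminf_le)
         (auto simp: ennreal_mult'[symmetric] power_mult_distrib[symmetric] intro!: power_mono)
    finally show ?thesis by simp
  qed
  then show ?thesis
    unfolding hausdorff_pre_def[of d "\<delta> / K"] by (auto simp: ennreal_mult_INF K intro!: INF_greatest)
qed

lemma hausdorff_measure_lipschitz_image:
  fixes \<phi> :: "'a::metric_space \<Rightarrow> 'b::metric_space"
  assumes K: "0 < K" and lip: "\<And>a b. a \<in> S \<Longrightarrow> b \<in> S \<Longrightarrow> dist (\<phi> a) (\<phi> b) \<le> K * dist a b"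
  shows "hausdorff_measure d (\<phi> ` S) \<le> ennreal (K ^ d) * hausdorff_measure d S"
proof -
  have "hausdorff_measure d (\<phi> ` S) \<le> (SUP \<delta>\<in>{0<..}. ennreal (K ^ d) * hausdorff_pre d (\<delta> / K) S)"
    unfolding hausdorff_measure_def
    by (intro SUP_mono) (use hausdorff_pre_lipschitz_image[OF K lip] in auto)
  also have "\<dots> \<le> ennreal (K ^ d) * hausdorff_measure d S"
    by (auto simp: SUP_mult_left_ennreal[symmetric] K
             intro!: SUP_least mult_left_mono hausdorff_pre_le_hausdorff_measure)
  finally show ?thesis .
qed

lemma hausdorff_measure_affinity:
  fixes S :: "'a::real_normed_vector set"
  assumes "0 < \<rho>"
  shows "hausdorff_measure d ((\<lambda>y. a + \<rho> *\<^sub>R y) ` S) = ennreal (\<rho> ^ d) * hausdorff_measure d S"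
proof (rule antisym)
  let ?T = "(\<lambda>y. a + \<rho> *\<^sub>R y) ` S"
  show "hausdorff_measure d ?T \<le> ennreal (\<rho> ^ d) * hausdorff_measure d S"
    using assms by (intro hausdorff_measure_lipschitz_image)
      (auto simp: dist_norm simp flip: scaleR_diff_right)
  have "S = (\<lambda>z. (1 / \<rho>) *\<^sub>R (z - a)) ` ?T"
    using assms by (auto simp: image_image)
  also have "hausdorff_measure d \<dots> \<le> ennreal ((1 / \<rho>) ^ d) * hausdorff_measure d ?T"
    using assms by (intro hausdorff_measure_lipschitz_image)
      (auto simp: dist_norm simp flip: scaleR_diff_right)
  finally have "ennreal (\<rho> ^ d) * hausdorff_measure d S
      \<le> ennreal (\<rho> ^ d) * (ennreal ((1 / \<rho>) ^ d) * hausdorff_measure d ?T)"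
    by (rule mult_left_mono) simp
  also have "\<dots> = hausdorff_measure d ?T"
    using assms by (simp add: mult.assoc[symmetric] ennreal_mult[symmetric] flip: power_mult_distrib)
  finally show "ennreal (\<rho> ^ d) * hausdorff_measure d S \<le> hausdorff_measure d ?T" .
qed

lemma hausdorff_measure_translation:
  fixes S :: "'a::real_normed_vector set"
  shows "hausdorff_measure d ((+) a ` S) = hausdorff_measure d S"
  using hausdorff_measure_affinity[where \<rho>=1 and a=a and d=d and S=S] by simp

lemma hausdorff_measure_cball:
  fixes a :: "'a::real_normed_vector"
  assumes "0 < \<rho>"
  shows "hausdorff_measure d (cball a \<rho>) = ennreal (\<rho> ^ d) * hausdorff_measure d (cball (0::'a) 1)"
proof -
  have "cball a \<rho> = (\<lambda>y. a + \<rho> *\<^sub>R y) ` cball 0 1"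
  proof -
    have "cball a \<rho> = (+) a ` cball 0 \<rho>"
      using cball_translation[of a 0 \<rho>] by simp
    also have "\<dots> = (+) a ` (\<lambda>y. \<rho> *\<^sub>R y) ` cball 0 1"
      using assms by (subst cball_scale) auto
    finally show ?thesis by (simp add: image_image)
  qed
  then show ?thesis
    using hausdorff_measure_affinity[OF assms] by simp
qed

lemma hausdorff_pre_separated_Un:
  fixes E F :: "'a::metric_space set"
  assumes "0 < d" and sep: "\<And>a b. a \<in> E \<Longrightarrow> b \<in> F \<Longrightarrow> \<delta> < dist a b"
  shows "hausdorff_pre d \<delta> E + hausdorff_pre d \<delta> F \<le> hausdorff_pre d \<delta> (E \<union> F)"
  unfolding hausdorff_pre_def[of d \<delta> "E \<union> F"]
proof (intro INF_greatest, clarify)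
  fix A :: "nat \<Rightarrow> 'a set"
  assume cover: "E \<union> F \<subseteq> (\<Union>i. A i)" and A: "\<forall>i. bounded (A i) \<and> diameter (A i) \<le> \<delta>"
  define restr where "restr X i = (if A i \<inter> X = {} then {} else A i)" for X i
  have "0 \<le> \<delta>"
    using A diameter_ge_0[of "A 0"] by (meson order_trans)
  then have pre_le: "hausdorff_pre d \<delta> X \<le> (\<Sum>i. ennreal (diameter (restr X i) ^ d))"
    if "X \<subseteq> E \<union> F" for X
    unfolding hausdorff_pre_def using cover A that
    by (intro INF_lower) (auto simp: restr_def, blast)
  have "A i \<inter> E = {} \<or> A i \<inter> F = {}" for i
    using A sep diameter_bounded_bound by (smt (verit) disjoint_iff)
  then have split: "ennreal (diameter (restr E i) ^ d) + ennreal (diameter (restr F i) ^ d)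
      \<le> ennreal (diameter (A i) ^ d)" for i
    using \<open>0 < d\<close> by (auto simp: restr_def zero_power)
  have "hausdorff_pre d \<delta> E + hausdorff_pre d \<delta> F
      \<le> (\<Sum>i. ennreal (diameter (restr E i) ^ d)) + (\<Sum>i. ennreal (diameter (restr F i) ^ d))"
    by (intro add_mono pre_le) auto
  also have "\<dots> = (\<Sum>i. ennreal (diameter (restr E i) ^ d) + ennreal (diameter (restr F i) ^ d))"
    by (rule suminf_add) auto
  also have "\<dots> \<le> (\<Sum>i. ennreal (diameter (A i) ^ d))"
    by (intro suminf_le split) auto
  finally show "hausdorff_pre d \<delta> E + hausdorff_pre d \<delta> F \<le> (\<Sum>i. ennreal (diameter (A i) ^ d))" .
qed

lemma hausdorff_measure_separated_Un:
  fixes E F :: "'a::metric_space set"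
  assumes "0 < d" "0 < e" and sep: "\<And>a b. a \<in> E \<Longrightarrow> b \<in> F \<Longrightarrow> e \<le> dist a b"
  shows "hausdorff_measure d E + hausdorff_measure d F \<le> hausdorff_measure d (E \<union> F)"
proof -
  have pre: "hausdorff_pre d \<delta> E + hausdorff_pre d \<delta>' F \<le> hausdorff_measure d (E \<union> F)"
    if "0 < \<delta>" "0 < \<delta>'" for \<delta> \<delta>'
  proof -
    define \<mu> where "\<mu> = min (min \<delta> \<delta>') (e / 2)"
    have \<mu>: "0 < \<mu>" "\<mu> \<le> \<delta>" "\<mu> \<le> \<delta>'" "\<mu> < e"
      using that assms unfolding \<mu>_def by auto
    have "hausdorff_pre d \<delta> E + hausdorff_pre d \<delta>' F \<le> hausdorff_pre d \<mu> E + hausdorff_pre d \<mu> F"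
      by (intro add_mono hausdorff_pre_antimono \<mu>)
    also have "\<dots> \<le> hausdorff_pre d \<mu> (E \<union> F)"
      using sep \<mu>(4) by (intro hausdorff_pre_separated_Un \<open>0 < d\<close>) fastforce
    also have "\<dots> \<le> hausdorff_measure d (E \<union> F)"
      by (rule hausdorff_pre_le_hausdorff_measure[OF \<mu>(1)])
    finally show ?thesis .
  qed
  have "hausdorff_measure d E + hausdorff_measure d F
      = (SUP \<delta>'\<in>{0<..}. SUP \<delta>\<in>{0<..}. hausdorff_pre d \<delta> E + hausdorff_pre d \<delta>' F)"
    unfolding hausdorff_measure_def
    by (simp add: ennreal_SUP_add_left[symmetric] ennreal_SUP_add_right)
  also have "\<dots> \<le> hausdorff_measure d (E \<union> F)"
    using pre by (auto intro!: SUP_least)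
  finally show ?thesis .
qed

lemma hausdorff_measure_disjoint_compact_UN:
  fixes K :: "'i \<Rightarrow> 'a::heine_borel set"
  assumes "0 < d" "finite I" "\<And>i. i \<in> I \<Longrightarrow> compact (K i)"
    and "pairwise (\<lambda>i j. disjnt (K i) (K j)) I"
  shows "(\<Sum>i\<in>I. hausdorff_measure d (K i)) \<le> hausdorff_measure d (\<Union>i\<in>I. K i)"
  using assms(2-4)
proof (induction I rule: finite_induct)
  case (insert i I)
  have "K i \<inter> (\<Union>j\<in>I. K j) = {}"
    using insert.hyps(2) insert.prems(2) by (fastforce simp: pairwise_def disjnt_def)
  moreover have "compact (\<Union>j\<in>I. K j)"
    using insert by auto
  ultimately obtain e where e: "0 < e" "\<And>a b. a \<in> K i \<Longrightarrow> b \<in> (\<Union>j\<in>I. K j) \<Longrightarrow> e \<le> dist a b"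
    using separate_compact_closed[of "K i" "\<Union>j\<in>I. K j"] insert.prems(1) compact_imp_closed
    by (metis insertI1)
  have "(\<Sum>j\<in>insert i I. hausdorff_measure d (K j))
      \<le> hausdorff_measure d (K i) + hausdorff_measure d (\<Union>j\<in>I. K j)"
    using insert by (auto simp: pairwise_insert intro!: add_left_mono)
  also have "\<dots> \<le> hausdorff_measure d (K i \<union> (\<Union>j\<in>I. K j))"
    by (rule hausdorff_measure_separated_Un[OF \<open>0 < d\<close> e])
  finally show ?case by simp
qed simp

lemma emeasure_countable_UN_le_SUP_finite:
  assumes "countable C" "\<And>i. i \<in> C \<Longrightarrow> A i \<in> sets M"
  shows "emeasure M (\<Union>i\<in>C. A i) \<le> (SUP F\<in>{F. finite F \<and> F \<subseteq> C}. emeasure M (\<Union>i\<in>F. A i))"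
proof (cases "C = {}")
  case False
  define c where "c = from_nat_into C"
  have c: "range c = C"
    unfolding c_def using range_from_nat_into[OF False assms(1)] .
  have "(\<Union>i\<in>C. A i) = (\<Union>k. \<Union>i\<in>c ` {..<k}. A i)"
    unfolding c[symmetric] by auto
  moreover have "incseq (\<lambda>k. \<Union>i\<in>c ` {..<k}. A i)"
    by (intro monoI UN_mono image_mono) auto
  ultimately have "emeasure M (\<Union>i\<in>C. A i) = (SUP k. emeasure M (\<Union>i\<in>c ` {..<k}. A i))"
    using c assms(2) by (auto intro!: SUP_emeasure_incseq[symmetric])
  also have "\<dots> \<le> (SUP F\<in>{F. finite F \<and> F \<subseteq> C}. emeasure M (\<Union>i\<in>F. A i))"
    using c by (intro SUP_least SUP_upper) auto
  finally show ?thesis .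
qed simp

lemma hausdorff_measure_ge_lebesgue_disjoint_cballs:
  fixes c :: "'i \<Rightarrow> 'a::euclidean_space"
  assumes "finite F" "\<And>i. i \<in> F \<Longrightarrow> 0 < \<rho> i"
    and "pairwise (\<lambda>i j. disjnt (cball (c i) (\<rho> i)) (cball (c j) (\<rho> j))) F"
  shows "hausdorff_measure DIM('a) (cball (0::'a) 1) * emeasure lebesgue (\<Union>i\<in>F. cball (c i) (\<rho> i))
           \<le> ennreal (unit_ball_vol DIM('a)) * hausdorff_measure DIM('a) (\<Union>i\<in>F. cball (c i) (\<rho> i))"
proof -
  let ?H = "hausdorff_measure DIM('a) :: 'a set \<Rightarrow> ennreal" and ?\<omega> = "unit_ball_vol DIM('a)"
  have "emeasure lebesgue (\<Union>i\<in>F. cball (c i) (\<rho> i)) \<le> (\<Sum>i\<in>F. emeasure lebesgue (cball (c i) (\<rho> i)))"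
    using assms(1) by (intro emeasure_subadditive_finite) auto
  also have "\<dots> = (\<Sum>i\<in>F. ennreal ?\<omega> * ennreal (\<rho> i ^ DIM('a)))"
    using assms(2) by (intro sum.cong) (auto simp: emeasure_cball less_imp_le ennreal_mult)
  finally have "?H (cball 0 1) * emeasure lebesgue (\<Union>i\<in>F. cball (c i) (\<rho> i))
      \<le> ?H (cball 0 1) * (\<Sum>i\<in>F. ennreal ?\<omega> * ennreal (\<rho> i ^ DIM('a)))"
    by (simp add: mult_left_mono)
  also have "\<dots> = ennreal ?\<omega> * (\<Sum>i\<in>F. ?H (cball (c i) (\<rho> i)))"
  proof -
    have "?H (cball (c i) (\<rho> i)) = ennreal (\<rho> i ^ DIM('a)) * ?H (cball 0 1)" if "i \<in> F" for i
      using that assms(2) by (intro hausdorff_measure_cball) auto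
    then show ?thesis
      by (simp add: sum_distrib_left mult_ac cong: sum.cong)
  qed
  also have "\<dots> \<le> ennreal ?\<omega> * ?H (\<Union>i\<in>F. cball (c i) (\<rho> i))"
    using assms(1,3) by (intro mult_left_mono hausdorff_measure_disjoint_compact_UN) auto
  finally show ?thesis .
qed

lemma hausdorff_measure_ge_lebesgue_open:
  fixes U :: "'a::euclidean_space set"
  assumes "open U"
  shows "hausdorff_measure DIM('a) (cball (0::'a) 1) * emeasure lebesgue U
           \<le> ennreal (unit_ball_vol DIM('a)) * hausdorff_measure DIM('a) U"
proof -
  let ?H = "hausdorff_measure DIM('a) :: 'a set \<Rightarrow> ennreal" and ?\<omega> = "unit_ball_vol DIM('a)"
  let ?B = "\<lambda>i :: 'a \<times> real. cball (fst i) (snd i)"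
  obtain C where C: "countable C" "\<And>i. i \<in> C \<Longrightarrow> 0 < snd i \<and> ?B i \<subseteq> U"
     "pairwise (\<lambda>i j. disjnt (?B i) (?B j)) C" "negligible (U - (\<Union>i\<in>C. ?B i))"
  proof (rule Vitali_covering_theorem_cballs[of "{i. 0 < snd i \<and> ?B i \<subseteq> U}" snd U fst])
    fix x and e :: real assume "x \<in> U" "0 < e"
    then obtain \<epsilon> where "0 < \<epsilon>" "cball x \<epsilon> \<subseteq> U"
      using assms open_contains_cball by blast
    then show "\<exists>i. i \<in> {i. 0 < snd i \<and> ?B i \<subseteq> U} \<and> x \<in> ?B i \<and> snd i < e"
      using \<open>0 < e\<close> by (intro exI[of _ "(x, min \<epsilon> (e / 2))"]) auto
  qed auto
  have finite_part: "?H (cball 0 1) * emeasure lebesgue (\<Union>i\<in>F. ?B i) \<le> ennreal ?\<omega> * ?H U"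
    if "finite F" "F \<subseteq> C" for F
  proof -
    have "?H (cball 0 1) * emeasure lebesgue (\<Union>i\<in>F. ?B i) \<le> ennreal ?\<omega> * ?H (\<Union>i\<in>F. ?B i)"
      using that C(2,3) by (intro hausdorff_measure_ge_lebesgue_disjoint_cballs) (auto intro: pairwise_subset)
    also have "\<dots> \<le> ennreal ?\<omega> * ?H U"
      using that C(2) by (intro mult_left_mono hausdorff_measure_mono) auto
    finally show ?thesis .
  qed
  have "AE x in lebesgue. x \<notin> U - (\<Union>i\<in>C. ?B i)"
    using C(4) by (intro AE_not_in) (simp add: negligible_iff_null_sets)
  then have "emeasure lebesgue U \<le> emeasure lebesgue (\<Union>i\<in>C. ?B i)"
    using C(1) by (intro emeasure_mono_AE sets.countable_UN') auto
  also have "\<dots> \<le> (SUP F\<in>{F. finite F \<and> F \<subseteq> C}. emeasure lebesgue (\<Union>i\<in>F. ?B i))"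
    using C(1) by (intro emeasure_countable_UN_le_SUP_finite) auto
  finally have "?H (cball 0 1) * emeasure lebesgue U
      \<le> ?H (cball 0 1) * (SUP F\<in>{F. finite F \<and> F \<subseteq> C}. emeasure lebesgue (\<Union>i\<in>F. ?B i))"
    by (rule mult_left_mono) simp
  also have "\<dots> = (SUP F\<in>{F. finite F \<and> F \<subseteq> C}. ?H (cball 0 1) * emeasure lebesgue (\<Union>i\<in>F. ?B i))"
    by (simp add: SUP_mult_left_ennreal)
  also have "\<dots> \<le> ennreal ?\<omega> * ?H U"
    using finite_part by (auto intro!: SUP_least)
  finally show ?thesis .
qed

lemma measure_swap_coordinates_cbox:
  fixes a b :: "real^'n"
  shows "measure lebesgue ((\<lambda>x. \<chi> i. x $ Transposition.transpose m n i) ` cbox a b) = measure lebesgue (cbox a b)"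
proof -
  let ?t = "Transposition.transpose m n"
  let ?h = "\<lambda>x :: real^'n. \<chi> i. x $ ?t i"
  have box: "?h ` cbox a b = cbox (?h a) (?h b)"
    by (auto simp: mem_box_cart image_iff lambda_swap_Galois) (metis transpose_involutory)+
  have "(\<Prod>i\<in>UNIV. b $ ?t i - a $ ?t i) = (\<Prod>i\<in>UNIV. b $ i - a $ i)"
    using prod.permute[OF permutes_swap_id[of m UNIV n], of "\<lambda>i. b $ i - a $ i"]
    by (simp add: comp_def)
  moreover have "cbox (?h a) (?h b) = {} \<longleftrightarrow> cbox a b = {}"
    using box by auto
  ultimately show ?thesis
    unfolding box by (simp add: content_cbox_if_cart)
qed

lemma measure_shear_cbox:
  fixes a b :: "real^'n"
  assumes "m \<noteq> n"
  shows "measure lebesgue ((\<lambda>x. \<chi> i. if i = m then x $ m + x $ n else x $ i) ` cbox a b)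
           = measure lebesgue (cbox a b)"
proof -
  let ?h = "\<lambda>x :: real^'n. \<chi> i. if i = m then x $ m + x $ n else x $ i"
  have lin: "linear ?h"
    by (rule linearI) (simp_all add: vec_eq_iff algebra_simps)
  \<comment> \<open>\<open>measure_shear_interval\<close> needs \<open>0 \<le> a $ n\<close>, so first shift the box along axis \<open>n\<close>\<close>
  define t :: "real^'n" where "t = (a $ n) *\<^sub>R axis n 1"
  have box: "cbox a b = (+) t ` cbox (a - t) (b - t)"
    using cbox_translation[of t "a - t" "b - t"] by simp
  then have "?h ` cbox a b = (+) (?h t) ` ?h ` cbox (a - t) (b - t)"
    using linear_add[OF lin] by (simp add: image_image)
  then have "measure lebesgue (?h ` cbox a b) = measure lebesgue (?h ` cbox (a - t) (b - t))"
    by (simp add: measure_translation)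
  also have "\<dots> = measure lebesgue (cbox (a - t) (b - t))"
    by (cases "cbox (a - t) (b - t) = {}") (simp_all add: measure_shear_interval assms t_def)
  also have "\<dots> = measure lebesgue (cbox a b)"
    using box by (simp add: measure_translation)
  finally show ?thesis .
qed

text \<open>The library version \<open>measure_linear_image\<close> requires the index type to be of class
  \<open>wellorder\<close>; the elementary-matrix induction below works for any finite index type.\<close>

lemma measure_linear_image_cart:
  fixes f :: "real^'n \<Rightarrow> real^'n"
  assumes "linear f" "S \<in> lmeasurable"
  shows "f ` S \<in> lmeasurable \<and> measure lebesgue (f ` S) = \<bar>det (matrix f)\<bar> * measure lebesgue S"
proof -
  let ?P = "\<lambda>f :: real^'n \<Rightarrow> real^'n. \<forall>S\<in>lmeasurable.
              f ` S \<in> lmeasurable \<and> measure lebesgue (f ` S) = \<bar>det (matrix f)\<bar> * measure lebesgue S"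
  have preserving: "?P h"
    if "linear h" "\<bar>det (matrix h)\<bar> = 1" "\<And>a b. measure lebesgue (h ` cbox a b) = measure lebesgue (cbox a b)"
    for h
  proof
    fix S :: "(real^'n) set" assume "S \<in> lmeasurable"
    then show "h ` S \<in> lmeasurable \<and> measure lebesgue (h ` S) = \<bar>det (matrix h)\<bar> * measure lebesgue S"
      using measure_linear_sufficient[OF that(1) \<open>S \<in> lmeasurable\<close>, of 1] that(2,3) by simp
  qed
  have "?P f"
  proof (rule induct_linear_elementary[OF assms(1)])
    show "?P (g \<circ> h)" if "linear g" "linear h" "?P g" "?P h" for g h
    proof
      fix S :: "(real^'n) set" assume "S \<in> lmeasurable"
      then have "h ` S \<in> lmeasurable" "measure lebesgue (h ` S) = \<bar>det (matrix h)\<bar> * measure lebesgue S"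
        using that(4) by auto
      moreover have "g ` h ` S \<in> lmeasurable"
        "measure lebesgue (g ` h ` S) = \<bar>det (matrix g)\<bar> * measure lebesgue (h ` S)"
        using that(3) calculation(1) by blast+
      ultimately show "(g \<circ> h) ` S \<in> lmeasurable \<and>
          measure lebesgue ((g \<circ> h) ` S) = \<bar>det (matrix (g \<circ> h))\<bar> * measure lebesgue S"
        using that(1,2) by (simp add: image_comp matrix_compose det_mul abs_mult)
    qed
  next
    show "?P g" if "linear g" "\<And>x. g x $ i = 0" for g i
    proof -
      have "\<not> surj g"
        using that(2) by (metis (full_types) vec_component one_neq_zero surjE)
      then have "\<not> inj g" "det (matrix g) = 0"
        using that(1) linear_injective_imp_surjective det_nz_iff_inj by blast+
      then show ?thesis
        using that(1) negligible_linear_singular_image negligible_imp_measure0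
        by (auto intro: negligible_imp_measurable)
    qed
  next
    show "?P (\<lambda>x. \<chi> i. c i * x $ i)" for c
      by (simp add: measurable_stretch measure_stretch matrix_def axis_def det_diagonal)
  next
    fix m n :: 'n assume "m \<noteq> n"
    let ?h = "\<lambda>x :: real^'n. \<chi> i. x $ Transposition.transpose m n i"
    have "matrix ?h = (\<chi> i. mat 1 $ Transposition.transpose m n i)"
      by (simp add: matrix_def axis_def mat_def vec_eq_iff)
    then have "\<bar>det (matrix ?h)\<bar> = 1"
      by (simp add: det_permute_rows permutes_swap_id sign_swap_id)
    then show "?P ?h"
      by (intro preserving linearI measure_swap_coordinates_cbox) (simp_all add: vec_eq_iff)
  next
    fix m n :: 'n assume "m \<noteq> n"
    let ?h = "\<lambda>x :: real^'n. \<chi> i. if i = m then x $ m + x $ n else x $ i"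
    have "matrix ?h = (\<chi> k. if k = m then row m (mat 1) + 1 *s row n (mat 1) else row k (mat 1))"
      by (auto simp: matrix_def axis_def row_def mat_def vec_eq_iff)
    then have "\<bar>det (matrix ?h)\<bar> = 1"
      using det_row_operation[OF \<open>m \<noteq> n\<close>, of "mat 1 :: real^'n^'n" 1] by simp
    then show "?P ?h"
      by (intro preserving linearI measure_shear_cbox \<open>m \<noteq> n\<close>) (simp_all add: vec_eq_iff algebra_simps)
  qed
  then show ?thesis
    using assms(2) by blast
qed

lemma transpose_matrix_mult_matrix_nth:
  fixes f :: "real^'n \<Rightarrow> real^'m"
  shows "(transpose (matrix f) ** matrix f) $ i $ j = f (axis i 1) \<bullet> f (axis j 1)"
  by (simp add: matrix_matrix_mult_def transpose_def matrix_def inner_vec_def)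

lemma lin_vol_square:
  fixes A :: "real^'n \<Rightarrow> real^'n"
  shows "lin_vol A = \<bar>det (matrix A)\<bar>"
  by (simp add: lin_vol_def det_mul flip: power2_eq_square)

lemma lin_vol_comp_inner_preserving:
  fixes L :: "real^'n \<Rightarrow> real^'m" and \<Psi> :: "real^'m \<Rightarrow> real^'k"
  assumes "\<And>x y. \<Psi> (L x) \<bullet> \<Psi> (L y) = L x \<bullet> L y"
  shows "lin_vol (\<Psi> \<circ> L) = lin_vol L"
proof -
  have "transpose (matrix (\<Psi> \<circ> L)) ** matrix (\<Psi> \<circ> L) = transpose (matrix L) ** matrix L"
    using assms by (simp add: vec_eq_iff transpose_matrix_mult_matrix_nth)
  then show ?thesis
    by (simp add: lin_vol_def)
qed

lemma lin_vol_pos_imp_inj: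
  fixes L :: "real^'n \<Rightarrow> real^'m"
  assumes "linear L" "0 < lin_vol L"
  shows "inj L"
proof -
  have "det (transpose (matrix L) ** matrix L) \<noteq> 0"
    using assms(2) by (auto simp: lin_vol_def)
  then obtain B where "B ** (transpose (matrix L) ** matrix L) = mat 1"
    by (metis invertible_det_nz invertible_def)
  moreover have "(transpose (matrix L) ** matrix L) *v x = 0" if "L x = 0" for x
    using that matrix_vector_mul(2)[OF assms(1)]
    by (metis matrix_vector_mul_assoc matrix_vector_mult_0_right)
  ultimately have "x = 0" if "L x = 0" for x
    using that matrix_left_invertible_ker by blast
  then show ?thesis
    using assms(1) by (simp add: linear_injective_0)
qed

lemma orthonormal_frame_expansion:
  fixes e :: "'i::finite \<Rightarrow> 'a::euclidean_space"
  assumes e: "\<And>i j. e i \<bullet> e j = of_bool (i = j)" and a: "a \<in> span (range e)"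
  shows "(\<Sum>i\<in>UNIV. (e i \<bullet> a) *\<^sub>R e i) = a"
proof (rule vector_eq_dot_span[OF _ a])
  show "(\<Sum>i\<in>UNIV. (e i \<bullet> a) *\<^sub>R e i) \<in> span (range e)"
    by (intro span_sum span_scale span_base) auto
  show "b \<bullet> (\<Sum>i\<in>UNIV. (e i \<bullet> a) *\<^sub>R e i) = b \<bullet> a" if "b \<in> range e" for b
    using that by (auto simp: inner_sum_right e inner_commute)
qed

lemma orthonormal_frame_coords_inner:
  fixes e :: "'i::finite \<Rightarrow> 'a::euclidean_space"
  assumes e: "\<And>i j. e i \<bullet> e j = of_bool (i = j)" and "a \<in> span (range e)"
  shows "(\<chi> i. e i \<bullet> a) \<bullet> (\<chi> i. e i \<bullet> b) = a \<bullet> b"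
proof -
  have "(\<chi> i. e i \<bullet> a) \<bullet> (\<chi> i. e i \<bullet> b) = (\<Sum>i\<in>UNIV. (e i \<bullet> a) *\<^sub>R e i) \<bullet> b"
    by (simp add: inner_vec_def inner_sum_left)
  then show ?thesis
    using orthonormal_frame_expansion[OF assms] by simp
qed

lemma norm_orthonormal_frame_coords_le:
  fixes e :: "'i::finite \<Rightarrow> 'a::euclidean_space"
  assumes e: "\<And>i j. e i \<bullet> e j = of_bool (i = j)"
  shows "norm (\<chi> i. e i \<bullet> v) \<le> norm v"
proof -
  define p where "p = (\<Sum>i\<in>UNIV. (e i \<bullet> v) *\<^sub>R e i)"
  have p: "p \<in> span (range e)"
    unfolding p_def by (intro span_sum span_scale span_base) auto
  have same_coords: "(\<chi> i. e i \<bullet> p) = (\<chi> i. e i \<bullet> v)"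
    by (simp add: p_def vec_eq_iff inner_sum_right e)
  have "norm (\<chi> i. e i \<bullet> v) ^ 2 = p \<bullet> v"
    using orthonormal_frame_coords_inner[OF e p, of v] same_coords by (simp add: power2_norm_eq_inner)
  also have "\<dots> \<le> norm p * norm v"
    by (rule norm_cauchy_schwarz)
  also have "norm p = norm (\<chi> i. e i \<bullet> v)"
    using orthonormal_frame_coords_inner[OF e p, of p] same_coords by (simp add: norm_eq_sqrt_inner)
  finally show ?thesis
    by (metis power2_eq_square mult_le_cancel_left norm_ge_zero order.trans not_le)
qed

lemma orthonormal_frame_of_range_exists:
  fixes L :: "real^'n \<Rightarrow> real^'m"
  assumes "linear L" "inj L"
  obtains e :: "'n \<Rightarrow> real^'m" where "\<And>i j. e i \<bullet> e j = of_bool (i = j)" "span (range e) = range L"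
proof -
  obtain B where B: "pairwise orthogonal B" "\<And>x. x \<in> B \<Longrightarrow> norm x = 1"
      "independent B" "card B = dim (range L)" "span B = range L"
    using orthonormal_basis_subspace[OF subspace_UNIV[THEN linear_subspace_image[OF assms(1)]]] by metis
  have "dim (range L) = CARD('n)"
    using dim_image_eq[of L UNIV] assms by simp
  then obtain e where e: "bij_betw e (UNIV :: 'n set) B"
    using finite_same_card_bij[of UNIV B] B(3,4) by (metis finite_class.finite_UNIV finiteI_independent)
  then have "e i \<bullet> e j = of_bool (i = j)" for i j
    using B(1,2) by (auto simp: bij_betw_def inj_on_def pairwise_def orthogonal_def dot_square_norm) blast
  moreover have "span (range e) = range L"
    using e B(5) by (simp add: bij_betw_def)
  ultimately show ?thesis
    using that by blast
qed

lemma lin_vol_preserving_contraction_exists: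
  fixes L :: "real^'n \<Rightarrow> real^'m"
  assumes "linear L" "inj L"
  obtains \<Psi> :: "real^'m \<Rightarrow> real^'n"
  where "linear \<Psi>" "\<And>v. norm (\<Psi> v) \<le> norm v" "lin_vol (\<Psi> \<circ> L) = lin_vol L"
proof -
  obtain e :: "'n \<Rightarrow> real^'m" where e: "\<And>i j. e i \<bullet> e j = of_bool (i = j)" "span (range e) = range L"
    using orthonormal_frame_of_range_exists[OF assms] by blast
  define \<Psi> where "\<Psi> v = (\<chi> i. e i \<bullet> v)" for v
  have "linear \<Psi>"
    by (rule linearI) (simp_all add: \<Psi>_def vec_eq_iff inner_add_right)
  moreover have "norm (\<Psi> v) \<le> norm v" for v
    unfolding \<Psi>_def by (rule norm_orthonormal_frame_coords_le[OF e(1)])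
  moreover have "lin_vol (\<Psi> \<circ> L) = lin_vol L"
    by (rule lin_vol_comp_inner_preserving)
      (simp add: \<Psi>_def orthonormal_frame_coords_inner[OF e(1)] e(2))
  ultimately show ?thesis
    using that by blast
qed

lemma ball_subset_image_near_identity:
  fixes h :: "'a::euclidean_space \<Rightarrow> 'a"
  assumes "0 < r" "continuous_on (cball x r) h" "\<And>y. y \<in> cball x r \<Longrightarrow> norm (h y - y) \<le> s"
  shows "ball x (r - s) \<subseteq> h ` cball x r"
proof
  fix p assume p: "p \<in> ball x (r - s)"
  have "p' + (y - h y) \<in> cball x r" if "p' \<in> ball x (r - s)" "y \<in> cball x r" for p' y
  proof -
    have "dist x (p' + (y - h y)) \<le> dist x p' + norm (y - h y)"
      unfolding dist_norm diff_diff_eq[symmetric] by (rule norm_triangle_ineq4)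
    also have "\<dots> < r"
      using that assms(3)[of y] by (simp add: norm_minus_commute)
    finally show ?thesis
      by simp
  qed
  then show "p \<in> h ` cball x r"
    using brouwer_surjective_cball[OF assms(2,1) p] by blast
qed

lemma hausdorff_measure_linear_image_ball_ge:
  fixes S :: "real^'n \<Rightarrow> real^'n"
  assumes "linear S" "0 < \<rho>"
  shows "ennreal (\<bar>det (matrix S)\<bar> * \<rho> ^ CARD('n)) * hausdorff_measure CARD('n) (cball (0::real^'n) 1)
           \<le> hausdorff_measure CARD('n) (S ` ball 0 \<rho>)"
proof (cases "det (matrix S) = 0")
  case False
  let ?\<omega> = "unit_ball_vol CARD('n)" and ?H1 = "hausdorff_measure CARD('n) (cball (0::real^'n) 1)"
  have "open (S ` ball 0 \<rho>)"
    using False assms(1) det_nz_iff_inj linear_injective_imp_surjective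
    by (blast intro: open_surjective_linear_image)
  then have "?H1 * emeasure lebesgue (S ` ball 0 \<rho>) \<le> ennreal ?\<omega> * hausdorff_measure CARD('n) (S ` ball 0 \<rho>)"
    using hausdorff_measure_ge_lebesgue_open by fastforce
  moreover have "emeasure lebesgue (S ` ball 0 \<rho>) = ennreal ?\<omega> * ennreal (\<bar>det (matrix S)\<bar> * \<rho> ^ CARD('n))"
    using measure_linear_image_cart[OF assms(1) lmeasurable_ball] assms(2)
    by (simp add: emeasure_eq_measure2 content_ball ennreal_mult[symmetric] mult_ac)
  moreover have "0 < ?\<omega>"
    by simp
  ultimately show ?thesis
    by (simp add: mult_ac ennreal_mult_le_mult_iff)
qed simp

lemma linear_bounded_below_inverse:
  fixes S :: "'a::euclidean_space \<Rightarrow> 'a"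
  assumes "linear S" "0 < B" "\<And>w. B * norm w \<le> norm (S w)"
  obtains T where "linear T" "\<And>w. S (T w) = w" "\<And>w. T (S w) = w" "\<And>w. B * norm (T w) \<le> norm w"
proof -
  have "w = 0" if "S w = 0" for w
    using assms(2) assms(3)[of w] that by (simp add: mult_le_0_iff)
  then have "inj S"
    using linear_injective_0[OF assms(1)] by blast
  then obtain T where T: "linear T" "T \<circ> S = id"
    using linear_injective_left_inverse[OF assms(1)] by blast
  moreover have "S (T w) = w" for w
    using linear_injective_imp_surjective[OF assms(1) \<open>inj S\<close>] T(2) by (metis comp_apply id_apply surjD)
  moreover have "T (S w) = w" for w
    using T(2) by (metis comp_apply id_apply)
  ultimately show ?thesis
    using that assms(3) by metis
qed

lemma linear_image_ball_subset_near_affine_image: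
  fixes S k :: "'a::euclidean_space \<Rightarrow> 'a"
  assumes S: "linear S" "0 < B" "\<And>w. B * norm w \<le> norm (S w)"
    and k: "continuous_on (cball x r) k" "\<And>y. y \<in> cball x r \<Longrightarrow> norm (k y - c - S (y - x)) \<le> B * \<theta> * r"
    and "0 < r"
  shows "(+) c ` S ` ball 0 ((1 - \<theta>) * r) \<subseteq> k ` cball x r"
proof clarify
  obtain T where T: "linear T" "\<And>w. S (T w) = w" "\<And>w. T (S w) = w" "\<And>w. B * norm (T w) \<le> norm w"
    using linear_bounded_below_inverse[OF S] by blast
  define h where "h y = x + T (k y - c)" for y
  have "norm (h y - y) \<le> \<theta> * r" if "y \<in> cball x r" for y
  proof -
    have "h y - y = T (k y - c - S (y - x))"
      by (simp add: h_def linear_diff[OF T(1)] T(3))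
    then have "B * norm (h y - y) \<le> B * (\<theta> * r)"
      using T(4)[of "k y - c - S (y - x)"] k(2)[OF that] by simp
    then show ?thesis
      using S(2) by simp
  qed
  moreover have "continuous_on (cball x r) h"
  proof -
    have "continuous_on UNIV T"
      using T(1) by (simp add: linear_continuous_on linear_linear)
    moreover have "continuous_on (cball x r) (\<lambda>y. k y - c)"
      using k(1) by (intro continuous_on_diff continuous_on_const)
    ultimately have "continuous_on (cball x r) (\<lambda>y. T (k y - c))"
      by (rule continuous_on_compose2) auto
    then show ?thesis
      unfolding h_def by (intro continuous_on_add continuous_on_const)
  qed
  ultimately have ball: "ball x (r - \<theta> * r) \<subseteq> h ` cball x r"
    using \<open>0 < r\<close> by (intro ball_subset_image_near_identity)
  fix w :: 'a assume w: "w \<in> ball 0 ((1 - \<theta>) * r)"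
  have "dist x (x + w) = dist 0 w"
    by (simp add: dist_norm)
  then have "x + w \<in> h ` cball x r"
    using w ball by (auto simp: left_diff_distrib)
  then obtain y where "y \<in> cball x r" "h y = x + w"
    by (metis imageE)
  moreover from this have "k y = c + S w"
    using T(2)[of "k y - c"] by (simp add: h_def)
  ultimately show "c + S w \<in> k ` cball x r"
    by (metis image_eqI)
qed

lemma hausdorff_measure_image_ge_near_affine_square:
  fixes S k :: "real^'n \<Rightarrow> real^'n"
  assumes S: "linear S" "0 < B" "\<And>w. B * norm w \<le> norm (S w)"
    and k: "continuous_on (cball x r) k" "\<And>y. y \<in> cball x r \<Longrightarrow> norm (k y - c - S (y - x)) \<le> B * \<theta> * r"
    and "0 < r" "\<theta> < 1"
  shows "ennreal (\<bar>det (matrix S)\<bar> * (1 - \<theta>) ^ CARD('n)) * hausdorff_measure CARD('n) (cball x r)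
           \<le> hausdorff_measure CARD('n) (k ` cball x r)"
proof -
  let ?H = "hausdorff_measure CARD('n) :: (real^'n) set \<Rightarrow> ennreal" and ?\<rho> = "(1 - \<theta>) * r"
  have "ennreal (\<bar>det (matrix S)\<bar> * (1 - \<theta>) ^ CARD('n)) * ?H (cball x r)
      = ennreal (\<bar>det (matrix S)\<bar> * ?\<rho> ^ CARD('n)) * ?H (cball 0 1)"
    using \<open>0 < r\<close> \<open>\<theta> < 1\<close>
    by (simp add: hausdorff_measure_cball[OF \<open>0 < r\<close>, where a=x] ennreal_mult power_mult_distrib mult_ac)
  also have "\<dots> \<le> ?H (S ` ball 0 ?\<rho>)"
    using \<open>0 < r\<close> \<open>\<theta> < 1\<close> by (intro hausdorff_measure_linear_image_ball_ge S(1)) simp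
  also have "\<dots> = ?H ((+) c ` S ` ball 0 ?\<rho>)"
    by (simp only: hausdorff_measure_translation)
  also have "\<dots> \<le> ?H (k ` cball x r)"
    using linear_image_ball_subset_near_affine_image[OF S k \<open>0 < r\<close>] by (rule hausdorff_measure_mono)
  finally show ?thesis .
qed

lemma has_derivative_perturbation_bound:
  fixes f :: "'a::real_normed_vector \<Rightarrow> 'b::real_normed_vector"
  assumes "(f has_derivative f') (at x)" "0 < \<epsilon>"
  obtains r0 where "0 < r0"
    "\<And>r g y. r \<le> r0 \<Longrightarrow> y \<in> cball x r \<Longrightarrow> norm (g y - f y) \<le> \<epsilon> * r \<Longrightarrow>
       norm (g y - f x - f' (y - x)) \<le> 2 * \<epsilon> * r"
proof -
  obtain d where d: "0 < d" "\<And>y. norm (y - x) < d \<Longrightarrow> norm (f y - f x - f' (y - x)) \<le> \<epsilon> * norm (y - x)"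
    using assms unfolding has_derivative_at_alt by blast
  show ?thesis
  proof (rule that[of "d / 2"])
    fix r g y assume "r \<le> d / 2" "y \<in> cball x r" "norm (g y - f y) \<le> \<epsilon> * r"
    then have "norm (y - x) \<le> r" "norm (y - x) < d"
      using d(1) by (auto simp: dist_norm norm_minus_commute)
    then have "norm (f y - f x - f' (y - x)) \<le> \<epsilon> * r"
      using d(2) assms(2) by (meson mult_left_mono less_imp_le order_trans)
    moreover have "norm (g y - f x - f' (y - x)) \<le> norm (g y - f y) + norm (f y - f x - f' (y - x))"
      using norm_triangle_ineq[of "g y - f y" "f y - f x - f' (y - x)"] by (simp add: algebra_simps)
    ultimately show "norm (g y - f x - f' (y - x)) \<le> 2 * \<epsilon> * r"
      using \<open>norm (g y - f y) \<le> \<epsilon> * r\<close> by linarith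
  qed (use d in auto)
qed

lemma hausdorff_measure_image_ge_near_affine:
  fixes L :: "real^'n \<Rightarrow> real^'m"
  assumes "linear L" "0 < lin_vol L" "0 < \<theta>" "\<theta> < 1"
  obtains \<beta> where "0 < \<beta>"
    "\<And>g x c r. 0 < r \<Longrightarrow> continuous_on (cball x r) g \<Longrightarrow>
       (\<And>y. y \<in> cball x r \<Longrightarrow> norm (g y - c - L (y - x)) \<le> \<beta> * r) \<Longrightarrow>
       ennreal (lin_vol L * (1 - \<theta>) ^ CARD('n)) * hausdorff_measure CARD('n) (cball x r)
         \<le> hausdorff_measure CARD('n) (g ` cball x r)"
proof -
  obtain \<Psi> :: "real^'m \<Rightarrow> real^'n"
    where \<Psi>: "linear \<Psi>" "\<And>v. norm (\<Psi> v) \<le> norm v" "lin_vol (\<Psi> \<circ> L) = lin_vol L"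
    using lin_vol_preserving_contraction_exists[OF assms(1) lin_vol_pos_imp_inj[OF assms(1,2)]] by blast
  let ?S = "\<Psi> \<circ> L"
  have S: "linear ?S" "\<bar>det (matrix ?S)\<bar> = lin_vol L"
    using \<Psi> assms(1) by (simp_all add: linear_compose lin_vol_square)
  then have "inj ?S"
    using assms(2) det_nz_iff_inj by fastforce
  then obtain B where B: "0 < B" "\<And>w. B * norm w \<le> norm (?S w)"
    using linear_inj_bounded_below_pos[OF S(1)] by blast
  show ?thesis
  proof (rule that[of "B * \<theta>"])
    show "0 < B * \<theta>"
      using B(1) assms(3) by simp
    fix g x c r
    assume r: "0 < r" and g: "continuous_on (cball x r) g"
      and near: "\<And>y. y \<in> cball x r \<Longrightarrow> norm (g y - c - L (y - x)) \<le> B * \<theta> * r"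
    have "norm ((\<Psi> \<circ> g) y - \<Psi> c - ?S (y - x)) \<le> B * \<theta> * r" if "y \<in> cball x r" for y
      using \<Psi>(2)[of "g y - c - L (y - x)"] near[OF that] by (simp add: linear_diff[OF \<Psi>(1)])
    moreover have "continuous_on (cball x r) (\<Psi> \<circ> g)"
      by (rule continuous_on_compose[OF g linear_continuous_on]) (simp add: \<Psi>(1) linear_linear)
    ultimately have "ennreal (lin_vol L * (1 - \<theta>) ^ CARD('n)) * hausdorff_measure CARD('n) (cball x r)
        \<le> hausdorff_measure CARD('n) ((\<Psi> \<circ> g) ` cball x r)"
      using hausdorff_measure_image_ge_near_affine_square[OF S(1) B, of x r "\<Psi> \<circ> g" "\<Psi> c" \<theta>, unfolded S(2)]
        r assms(4) by blast
    also have "\<dots> \<le> hausdorff_measure CARD('n) (g ` cball x r)"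
    proof -
      have "dist (\<Psi> a) (\<Psi> b) \<le> 1 * dist a b" for a b
        using \<Psi>(2)[of "a - b"] by (simp add: dist_norm linear_diff[OF \<Psi>(1)])
      then show ?thesis
        using hausdorff_measure_lipschitz_image[of 1 "g ` cball x r" \<Psi>] by (simp add: image_comp)
    qed
    finally show "ennreal (lin_vol L * (1 - \<theta>) ^ CARD('n)) * hausdorff_measure CARD('n) (cball x r)
        \<le> hausdorff_measure CARD('n) (g ` cball x r)" .
  qed
qed

theorem theorem3p2:
  fixes \<Omega> :: "(real^'n) set" and f :: "real^'n \<Rightarrow> real^'m"
    and f' :: "real^'n \<Rightarrow> real^'m" and x :: "real^'n" and \<eta> :: real
  assumes "CARD('n) \<le> CARD('m)"
    and "open \<Omega>"
    and "continuous_on \<Omega> f"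
    and "x \<in> \<Omega>"
    and "(f has_derivative f') (at x)"
    and "0 < \<eta>" and "\<eta> < 1"
  shows "\<exists>\<delta>>0. \<exists>r0>0. \<forall>r g. 0 < r \<and> r \<le> r0 \<and>
           continuous_on (cball x r) (g :: real^'n \<Rightarrow> real^'m) \<and>
           (\<forall>y\<in>cball x r. norm (g y - f y) \<le> \<delta> * r) \<longrightarrow>
           hausdorff_measure CARD('n) (g ` cball x r)
             \<ge> ennreal (\<eta> * lin_vol f') * hausdorff_measure CARD('n) (cball x r)"
proof (cases "0 < lin_vol f'")
  case False
  then have "ennreal (\<eta> * lin_vol f') = 0"
    using \<open>0 < \<eta>\<close> by (simp add: ennreal_eq_0_iff mult_nonneg_nonpos)
  then show ?thesis
    by (intro exI[of _ 1] conjI zero_less_one) auto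
next
  case True
  define \<theta> where "\<theta> = 1 - root CARD('n) \<eta>"
  have \<theta>: "0 < \<theta>" "\<theta> < 1" "(1 - \<theta>) ^ CARD('n) = \<eta>"
    using \<open>0 < \<eta>\<close> \<open>\<eta> < 1\<close> by (simp_all add: \<theta>_def)
  obtain \<beta> where \<beta>: "0 < \<beta>" and image_ge: "\<And>g x c r. 0 < r \<Longrightarrow> continuous_on (cball x r) g \<Longrightarrow>
       (\<And>y. y \<in> cball x r \<Longrightarrow> norm (g y - c - f' (y - x)) \<le> \<beta> * r) \<Longrightarrow>
       ennreal (lin_vol f' * (1 - \<theta>) ^ CARD('n)) * hausdorff_measure CARD('n) (cball x r)
         \<le> hausdorff_measure CARD('n) (g ` cball x r)"
    using hausdorff_measure_image_ge_near_affine[OF has_derivative_linear[OF assms(5)] True \<theta>(1,2)]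
    by blast
  obtain r0 where r0: "0 < r0" "\<And>r g y. r \<le> r0 \<Longrightarrow> y \<in> cball x r \<Longrightarrow>
       norm (g y - f y) \<le> \<beta> / 2 * r \<Longrightarrow> norm (g y - f x - f' (y - x)) \<le> 2 * (\<beta> / 2) * r"
    using has_derivative_perturbation_bound[OF assms(5), of "\<beta> / 2"] \<beta> by auto
  show ?thesis
  proof (rule exI[of _ "\<beta> / 2"], intro conjI exI[of _ r0] allI impI)
    fix r g assume "0 < r \<and> r \<le> r0 \<and> continuous_on (cball x r) g \<and>
      (\<forall>y\<in>cball x r. norm (g y - f y) \<le> \<beta> / 2 * r)"
    then have "ennreal (lin_vol f' * (1 - \<theta>) ^ CARD('n)) * hausdorff_measure CARD('n) (cball x r)
        \<le> hausdorff_measure CARD('n) (g ` cball x r)"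
      using r0(2)[of r _ g] by (intro image_ge) auto
    then show "ennreal (\<eta> * lin_vol f') * hausdorff_measure CARD('n) (cball x r)
        \<le> hausdorff_measure CARD('n) (g ` cball x r)"
      using \<theta>(3) by (simp add: mult.commute)
  qed (use \<beta> r0 in auto)
qed

end
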